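(* Let $\mathbb{K}\in\{\mathbb{R},\mathbb{C}\}$, $\mathbf{R}_U\in\mathbb{K}^{n\times n}$ self-adjoint positive definite, $U:=\mathbb{K}^n$ with $\langle\mathbf{x},\mathbf{y}\rangle_U:=\langle\mathbf{R}_U\mathbf{x},\mathbf{y}\rangle$, norm $\|\cdot\|_U$, dual norm $\|\mathbf{y}\|_{U'}:=\langle\mathbf{y},\mathbf{R}_U^{-1}\mathbf{y}\rangle^{1/2}$. Fix $\mu$, $\mathbf{A}(\mu)\in\mathbb{K}^{n\times n}$, $\mathbf{b}(\mu)\in\mathbb{K}^n$, $\mathbf{\Theta}\in\mathbb{K}^{k\times n}$, a subspace $U_r\subseteq U$, a vector $\mathbf{u}_r(\mu)\in U_r$, and $\eta(\mu)>0$ with $\eta(\mu)\le\min_{\mathbf{x}\in U\setminus\{\mathbf{0}\}}\|\mathbf{A}(\mu)\mathbf{x}\|_{U'}/\|\mathbf{x}\|_U$. Let $\mathbf{r}(\mathbf{x};\mu):=\mathbf{b}(\mu)-\mathbf{A}(\mu)\mathbf{x}$, $Y_r(\mu):=U_r+\mathrm{span}\{\mathbf{R}_U^{-1}\mathbf{r}(\mathbf{x};\mu):\mathbf{x}\in U_r\}$, $\Delta(\mathbf{u}_r(\mu);\mu):=\|\mathbf{r}(\mathbf{u}_r(\mu);\mu)\|_{U'}/\eta(\mu)$ and $\Delta^{\mathbf{\Theta}}(\mathbf{u}_r(\mu);\mu):=\|\mathbf{\Theta}\mathbf{R}_U^{-1}\mathbf{r}(\mathbf{u}_r(\mu);\mu)\|/\eta(\mu)$.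 If for some $\varepsilon\in[0,1)$, $|\langle\mathbf{x},\mathbf{y}\rangle_U-\langle\mathbf{\Theta}\mathbf{x},\mathbf{\Theta}\mathbf{y}\rangle|\le\varepsilon\|\mathbf{x}\|_U\|\mathbf{y}\|_U$ for all $\mathbf{x},\mathbf{y}\in Y_r(\mu)$, then $$\sqrt{1-\varepsilon}\,\Delta(\mathbf{u}_r(\mu);\mu)\le\Delta^{\mathbf{\Theta}}(\mathbf{u}_r(\mu);\mu)\le\sqrt{1+\varepsilon}\,\Delta(\mathbf{u}_r(\mu);\mu).$$
   Context: $\langle\mathbf{x},\mathbf{y}\rangle=\mathbf{x}^{\mathrm{H}}\mathbf{y}$ is the canonical inner product and $\|\cdot\|$ the Euclidean norm. *)

theory Defs
  imports "HOL-Analysis.Analysis"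
begin

text \<open>The scalar field \<K> is represented as a subset of the complex numbers:
  either the reals (embedded) or all of the complex numbers.\<close>
definition is_scalar_field :: "complex set \<Rightarrow> bool" where
  "is_scalar_field K \<longleftrightarrow> K = range complex_of_real \<or> K = UNIV"

definition cinner :: "complex ^ 'n \<Rightarrow> complex ^ 'n \<Rightarrow> complex" where
  "cinner x y = (\<Sum>i\<in>UNIV. cnj (x $ i) * y $ i)"

definition Kvec :: "complex set \<Rightarrow> complex ^ 'n \<Rightarrow> bool" where
  "Kvec K x \<longleftrightarrow> (\<forall>i. x $ i \<in> K)"

definition Kmat :: "complex set \<Rightarrow> complex ^ 'n ^ 'm \<Rightarrow> bool" where
  "Kmat K M \<longleftrightarrow> (\<forall>i j. M $ i $ j \<in> K)"

definition Kspace :: "complex set \<Rightarrow> (complex ^ 'n) set" where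
  "Kspace K = {x. Kvec K x}"

definition Ksubspace :: "complex set \<Rightarrow> (complex ^ 'n) set \<Rightarrow> bool" where
  "Ksubspace K S \<longleftrightarrow> 0 \<in> S \<and> (\<forall>x\<in>S. \<forall>y\<in>S. x + y \<in> S)
     \<and> (\<forall>c\<in>K. \<forall>x\<in>S. c *s x \<in> S)"

definition Kspan :: "complex set \<Rightarrow> (complex ^ 'n) set \<Rightarrow> (complex ^ 'n) set" where
  "Kspan K X = \<Inter>{S. Ksubspace K S \<and> X \<subseteq> S}"

definition subspace_sum :: "(complex ^ 'n) set \<Rightarrow> (complex ^ 'n) set \<Rightarrow> (complex ^ 'n) set" where
  "subspace_sum S T = {s + t | s t. s \<in> S \<and> t \<in> T}"

definition self_adjoint :: "complex ^ 'n ^ 'n \<Rightarrow> bool" where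
  "self_adjoint M \<longleftrightarrow> (\<forall>i j. M $ i $ j = cnj (M $ j $ i))"

definition pos_def :: "complex set \<Rightarrow> complex ^ 'n ^ 'n \<Rightarrow> bool" where
  "pos_def K M \<longleftrightarrow> (\<forall>x\<in>Kspace K. x \<noteq> 0 \<longrightarrow>
      cinner (M *v x) x \<in> \<real> \<and> 0 < Re (cinner (M *v x) x))"

definition innerU :: "complex ^ 'n ^ 'n \<Rightarrow> complex ^ 'n \<Rightarrow> complex ^ 'n \<Rightarrow> complex" where
  "innerU R x y = cinner (R *v x) y"

definition normU :: "complex ^ 'n ^ 'n \<Rightarrow> complex ^ 'n \<Rightarrow> real" where
  "normU R x = sqrt (Re (innerU R x x))"

definition dualnormU :: "complex ^ 'n ^ 'n \<Rightarrow> complex ^ 'n \<Rightarrow> real" where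
  "dualnormU R y = sqrt (Re (cinner y (matrix_inv R *v y)))"

definition resid :: "complex ^ 'n ^ 'n \<Rightarrow> complex ^ 'n \<Rightarrow> complex ^ 'n \<Rightarrow> complex ^ 'n" where
  "resid A b x = b - A *v x"

definition Yr :: "complex set \<Rightarrow> complex ^ 'n ^ 'n \<Rightarrow> complex ^ 'n ^ 'n \<Rightarrow> complex ^ 'n
                   \<Rightarrow> (complex ^ 'n) set \<Rightarrow> (complex ^ 'n) set" where
  "Yr K R A b Ur = subspace_sum Ur (Kspan K ((\<lambda>x. matrix_inv R *v resid A b x) ` Ur))"

definition Delta :: "complex ^ 'n ^ 'n \<Rightarrow> complex ^ 'n ^ 'n \<Rightarrow> complex ^ 'n \<Rightarrow> real
                     \<Rightarrow> complex ^ 'n \<Rightarrow> real" where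
  "Delta R A b \<eta> u = dualnormU R (resid A b u) / \<eta>"

definition DeltaTheta :: "complex ^ 'n ^ 'k \<Rightarrow> complex ^ 'n ^ 'n \<Rightarrow> complex ^ 'n ^ 'n
                     \<Rightarrow> complex ^ 'n \<Rightarrow> real \<Rightarrow> complex ^ 'n \<Rightarrow> real" where
  "DeltaTheta \<Theta> R A b \<eta> u = norm (\<Theta> *v (matrix_inv R *v resid A b u)) / \<eta>"

end

theory Submission
  imports Defs
begin

text \<open>The Riesz representative \<open>y = R\<^sub>U\<^sup>-\<^sup>1 r(u\<^sub>r)\<close> of the residual lies in \<open>Y\<^sub>r\<close> and satisfies
  \<open>\<parallel>r(u\<^sub>r)\<parallel>\<^sub>U\<^sub>' = \<parallel>y\<parallel>\<^sub>U\<close> and \<open>\<parallel>\<Theta> R\<^sub>U\<^sup>-\<^sup>1 r(u\<^sub>r)\<parallel> = \<parallel>\<Theta> y\<parallel>\<close>. The embedding hypothesis with both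
  arguments equal to \<open>y\<close> gives \<open>|\<parallel>y\<parallel>\<^sub>U\<^sup>2 - \<parallel>\<Theta> y\<parallel>\<^sup>2| \<le> \<epsilon> \<parallel>y\<parallel>\<^sub>U\<^sup>2\<close>; taking square roots and dividing
  by \<open>\<eta>\<close> yields both bounds. Identifying the dual norm with \<open>\<parallel>y\<parallel>\<^sub>U\<close> requires
  \<open>R\<^sub>U R\<^sub>U\<^sup>-\<^sup>1 = I\<close>, i.e. invertibility of the positive definite \<open>R\<^sub>U\<close>; over \<open>\<real>\<close>
  definiteness is only known on real vectors, so a kernel vector is split into its real
  and imaginary parts.\<close>

lemma cinner_self_eq_norm_power2: "cinner v v = complex_of_real ((norm v)\<^sup>2)"
proof -
  have "cinner v v = (\<Sum>i\<in>UNIV. complex_of_real ((cmod (v$i))\<^sup>2))"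
    unfolding cinner_def by (intro sum.cong refl) (metis complex_norm_square mult.commute)
  also have "\<dots> = complex_of_real ((norm v)\<^sup>2)"
    by (simp add: norm_vec_def L2_set_def sum_nonneg)
  finally show ?thesis .
qed

lemma matrix_vector_mult_Re_Im:
  fixes M :: "complex ^ 'n ^ 'm"
  assumes real: "\<And>i j. Im (M$i$j) = 0"
  shows "M *v (\<chi> j. complex_of_real (Re (x$j))) = (\<chi> i. complex_of_real (Re ((M *v x)$i)))"
    and "M *v (\<chi> j. complex_of_real (Im (x$j))) = (\<chi> i. complex_of_real (Im ((M *v x)$i)))"
  by (auto simp: vec_eq_iff matrix_vector_mult_def complex_eq_iff Re_sum Im_sum real)

lemma pos_def_kernel_trivial:
  fixes R :: "complex ^ 'n ^ 'n"
  assumes field: "is_scalar_field K" and R_K: "Kmat K R" and R_pd: "pos_def K R"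
    and Rx: "R *v x = 0"
  shows "x = 0"
proof -
  have definite: "y = 0" if "y \<in> Kspace K" "R *v y = 0" for y
    using R_pd that unfolding pos_def_def by (auto simp: cinner_def)
  show ?thesis
  proof (cases "K = UNIV")
    case True
    then show ?thesis using definite[of x] Rx by (simp add: Kspace_def Kvec_def)
  next
    case False
    then have K: "K = range complex_of_real" using field by (auto simp: is_scalar_field_def)
    have real: "Im (R$i$j) = 0" for i j
      using R_K K unfolding Kmat_def by (metis Im_complex_of_real imageE)
    have "(\<chi> j. complex_of_real (Re (x$j))) = 0"
      by (rule definite) (auto simp: Kspace_def Kvec_def K matrix_vector_mult_Re_Im[OF real] Rx vec_eq_iff)
    moreover have "(\<chi> j. complex_of_real (Im (x$j))) = 0"
      by (rule definite) (auto simp: Kspace_def Kvec_def K matrix_vector_mult_Re_Im[OF real] Rx vec_eq_iff)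
    ultimately show ?thesis by (auto simp: vec_eq_iff complex_eq_iff)
  qed
qed

lemma pos_def_matrix_inv_right:
  fixes R :: "complex ^ 'n ^ 'n"
  assumes "is_scalar_field K" "Kmat K R" "pos_def K R"
  shows "R ** matrix_inv R = mat 1"
proof -
  have "invertible R"
    using pos_def_kernel_trivial[OF assms] matrix_left_invertible_ker invertible_left_inverse
    by blast
  then have "\<exists>R'. R ** R' = mat 1 \<and> R' ** R = mat 1"
    by (simp add: invertible_def)
  then show ?thesis
    unfolding matrix_inv_def by (metis (mono_tags, lifting) someI_ex)
qed

lemma Riesz_residual_in_Yr:
  assumes "0 \<in> Ur" "x \<in> Ur"
  shows "matrix_inv R *v resid A b x \<in> Yr K R A b Ur"
proof -
  have "matrix_inv R *v resid A b x \<in> Kspan K ((\<lambda>x. matrix_inv R *v resid A b x) ` Ur)"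
    unfolding Kspan_def using assms(2) by blast
  then show ?thesis
    unfolding Yr_def subspace_sum_def using assms(1) by force
qed

lemma sqrt_bounds_of_relative_error:
  fixes a :: complex and t \<epsilon> :: real
  assumes close: "cmod (a - complex_of_real (t\<^sup>2)) \<le> \<epsilon> * \<bar>Re a\<bar>" and "0 \<le> \<epsilon>" "\<epsilon> < 1"
  shows "sqrt (1 - \<epsilon>) * sqrt (Re a) \<le> \<bar>t\<bar> \<and> \<bar>t\<bar> \<le> sqrt (1 + \<epsilon>) * sqrt (Re a)"
proof -
  have rel: "\<bar>Re a - t\<^sup>2\<bar> \<le> \<epsilon> * \<bar>Re a\<bar>"
    using close abs_Re_le_cmod[of "a - complex_of_real (t\<^sup>2)"] by simp
  have "Re a \<ge> 0"
  proof (rule ccontr)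
    assume "\<not> Re a \<ge> 0"
    then have "t\<^sup>2 \<le> (1 - \<epsilon>) * Re a" "(1 - \<epsilon>) * Re a < 0"
      using rel \<open>\<epsilon> < 1\<close> by (auto simp: abs_if algebra_simps mult_pos_neg split: if_splits)
    then show False by (smt (verit) zero_le_power2)
  qed
  then have "(1 - \<epsilon>) * Re a \<le> t\<^sup>2" "t\<^sup>2 \<le> (1 + \<epsilon>) * Re a"
    using rel by (auto simp: abs_if algebra_simps split: if_splits)
  then have "sqrt ((1 - \<epsilon>) * Re a) \<le> sqrt (t\<^sup>2)" "sqrt (t\<^sup>2) \<le> sqrt ((1 + \<epsilon>) * Re a)"
    using real_sqrt_le_mono by blast+
  then show ?thesis by (simp add: real_sqrt_mult)
qed

theorem corollary4p5:
  fixes K :: "complex set"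
    and R A :: "complex ^ 'n ^ 'n"
    and b ur :: "complex ^ 'n"
    and \<Theta> :: "complex ^ 'n ^ 'k"
    and Ur :: "(complex ^ 'n) set"
    and \<eta> \<epsilon> :: real
  assumes field: "is_scalar_field K"
    and R_K: "Kmat K R" and R_sa: "self_adjoint R" and R_pd: "pos_def K R"
    and A_K: "Kmat K A" and b_K: "Kvec K b" and Theta_K: "Kmat K \<Theta>"
    and Ur_sub: "Ksubspace K Ur" and Ur_U: "Ur \<subseteq> Kspace K"
    and ur_in: "ur \<in> Ur"
    and eta_pos: "\<eta> > 0"
    and eta_le: "\<forall>x\<in>Kspace K. x \<noteq> 0 \<longrightarrow> \<eta> \<le> dualnormU R (A *v x) / normU R x"
    and eps: "0 \<le> \<epsilon>" "\<epsilon> < 1"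
    and embed: "\<forall>x\<in>Yr K R A b Ur. \<forall>y\<in>Yr K R A b Ur.
        cmod (innerU R x y - cinner (\<Theta> *v x) (\<Theta> *v y)) \<le> \<epsilon> * normU R x * normU R y"
  shows "sqrt (1 - \<epsilon>) * Delta R A b \<eta> ur \<le> DeltaTheta \<Theta> R A b \<eta> ur
       \<and> DeltaTheta \<Theta> R A b \<eta> ur \<le> sqrt (1 + \<epsilon>) * Delta R A b \<eta> ur"
proof -
  define y where "y = matrix_inv R *v resid A b ur"
  have "R *v y = resid A b ur"
    using pos_def_matrix_inv_right[OF field R_K R_pd] by (simp add: y_def matrix_vector_mul_assoc)
  then have Delta_y: "Delta R A b \<eta> ur = sqrt (Re (innerU R y y)) / \<eta>"
    unfolding Delta_def dualnormU_def innerU_def y_def[symmetric] by simp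
  have DeltaTheta_y: "DeltaTheta \<Theta> R A b \<eta> ur = norm (\<Theta> *v y) / \<eta>"
    unfolding DeltaTheta_def y_def by simp
  have "y \<in> Yr K R A b Ur"
    using Riesz_residual_in_Yr Ur_sub ur_in unfolding y_def Ksubspace_def by blast
  then have "cmod (innerU R y y - cinner (\<Theta> *v y) (\<Theta> *v y)) \<le> \<epsilon> * normU R y * normU R y"
    using embed by blast
  then have "cmod (innerU R y y - complex_of_real ((norm (\<Theta> *v y))\<^sup>2)) \<le> \<epsilon> * \<bar>Re (innerU R y y)\<bar>"
    unfolding cinner_self_eq_norm_power2 normU_def by (simp add: mult.assoc)
  from sqrt_bounds_of_relative_error[OF this eps] show ?thesis
    unfolding Delta_y DeltaTheta_y using eta_pos by (simp add: divide_right_mono)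
qed

end
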